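(* Let $S=(\mathcal R,\Gamma\Rightarrow x:A)$ be quasi-tree-like, let $\mathcal B\in\mathsf{BIGL}$ and let $\mathcal I$ be an interpretation of $S$ into $\mathcal B$ with $\mathcal B,\mathcal I\not\models S$. Then for any instance of a rule of $\mathsf{labIK4}$ other than thinning whose conclusion is $S$, there is a premiss $S'$ of that instance and an interpretation $\mathcal I'$ of $S'$ into $\mathcal B$ such that $\mathcal B,\mathcal I'\not\models S'$ and $\mathcal I'(z)\ge\mathcal I(z)$ for all $z\in\mathrm{Var}(S)$.
   Context: Modal formulas: $A ::= p \mid \bot \mid A\wedge A \mid A \vee A \mid A \to A \mid \Box A \mid \Diamond A$. Labelled sequents $\mathcal R,\Gamma\Rightarrow\Delta$: $\mathcal R$ a set of relational atoms $xRy$, $\Gamma,\Delta$ multisets of labelled formulas $x:A$; $\mathrm{Var}$ = labels occurring. $\mathsf{labK4}$ rules (premisses / conclusion): id $\mathcal R,x:p\Rightarrow x:p$; $\bot$L $\mathcal R,x:\bot,\Gamma\Rightarrow\Delta$; cut: $\mathcal R,\Gamma\Rightarrow\Delta,x:A$ and $\mathcal R,\Gamma',x:A\Rightarrow\Delta'$ / $\mathcal R,\Gamma,\Gamma'\Rightarrow\Delta,\Delta'$; left/right weakening and contraction; thinning $\mathcal R,\Gamma\Rightarrow\Delta$ / $\mathcal R,\mathcal R',\Gamma\Rightarrow\Delta$; $\to$L: $\mathcal R,\Gamma\Rightarrow\Delta,x:A$ and $\mathcal R,\Gamma',x:B\Rightarrow\Delta'$ / $\mathcal R,\Gamma,\Gamma',x:A\to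 B\Rightarrow\Delta,\Delta'$; $\to$R: $\mathcal R,\Gamma,x:A\Rightarrow\Delta,x:B$ / $\mathcal R,\Gamma\Rightarrow\Delta,x:A\to B$; $\wedge$L: $\mathcal R,\Gamma,x:A_i\Rightarrow\Delta$ / $\mathcal R,\Gamma,x:A_0\wedge A_1\Rightarrow\Delta$; $\wedge$R: $\mathcal R,\Gamma\Rightarrow\Delta,x:A$ and $\mathcal R,\Gamma\Rightarrow\Delta,x:B$ / $\mathcal R,\Gamma\Rightarrow\Delta,x:A\wedge B$; $\vee$L: $\mathcal R,\Gamma,x:A\Rightarrow\Delta$ and $\mathcal R,\Gamma,x:B\Rightarrow\Delta$ / $\mathcal R,\Gamma,x:A\vee B\Rightarrow\Delta$; $\vee$R: $\mathcal R,\Gamma\Rightarrow\Delta,x:A_i$ / $\mathcal R,\Gamma\Rightarrow\Delta,x:A_0\vee A_1$; $\Diamond$L ($y$ fresh): $\mathcal R,xRy,\Gamma,y:A\Rightarrow\Delta$ / $\mathcal R,\Gamma,x:\Diamond A\Rightarrow\Delta$; $\Diamond$R: $\mathcal R,xRy,\Gamma\Rightarrow\Delta,y:A$ / $\mathcal R,xRy,\Gamma\Rightarrow\Delta,x:\Diamond A$; $\Box$R ($y$ fresh): $\mathcal R,xRy,\Gamma\Rightarrow\Delta,y:A$ / $\mathcal R,\Gamma\Rightarrow\Delta,x:\Box A$; $\Box$L: $\mathcal R,xRy,\Gamma,y:A\Rightarrow\Delta$ / $\mathcal R,xRy,\Gamma,x:\Box A\Rightarrow\Delta$; tr: $\mathcal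 R,xRy,yRz,xRz,\Gamma\Rightarrow\Delta$ / $\mathcal R,xRy,yRz,\Gamma\Rightarrow\Delta$. $\mathsf{labIK4}$: restriction to sequents with exactly one labelled formula on the right. Quasi-tree-like: $\mathcal R$ is a tree if some root $x_0\in\mathrm{Var}(\mathcal R)$ reaches each other label by a unique $R$-chain in $\mathcal R$; a quasi-tree if $\mathcal R_0\subseteq\mathcal R\subseteq\mathcal R_0^+$ for a tree $\mathcal R_0$; $\mathcal R,\Gamma\Rightarrow x:A$ is quasi-tree-like if either $\mathcal R=\emptyset$ and $\mathrm{Var}(\Gamma)\subseteq\{x\}$, or $\mathcal R$ is a quasi-tree containing all labels of $\Gamma$ and $x$. Birelational models $\mathcal B=(W,\le,R^{\mathcal B},V)$ with conditions (F1) $w\le w',wR^{\mathcal B}v\Rightarrow\exists v'(v\le v', w'R^{\mathcal B}v')$, (F2) $wR^{\mathcal B}v,v\le v'\Rightarrow\exists w'(w\le w',w'R^{\mathcal B}v')$, monotone $V$; satisfaction is intuitionistic for $\to$, $w\models\Box A$ iff for all $w'\ge w$ and $w'R^{\mathcal B}v$, $v\models A$; $w\models\Diamond A$ iff some $v$ with $wR^{\mathcal B}v$ satisfies $A$. $\mathsf{BIGL}$: $R^{\mathcal B}$ transitive and no infinite chain $x_1\le y_1R^{\mathcal B}x_2\le y_2R^{\mathcal B}\cdots$. An interpretation of a sequent $S$ into $\mathcal B$ is $\mathcal I:\mathrm{Var}(S)\to W$ with $\mathcal I(u)R^{\mathcal B}\mathcal I(v)$ whenever $uRv\in\mathcal R$;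 $\mathcal B,\mathcal I\models(\mathcal R,\Gamma\Rightarrow x:A)$ iff ($\mathcal B,\mathcal I(y)\models B$ for all $y:B\in\Gamma$) implies $\mathcal B,\mathcal I(x)\models A$. *)

theory Defs
  imports Main "HOL-Library.Multiset"
begin

datatype 'a form =
    Atom 'a
  | Bot
  | And "'a form" "'a form"
  | Or "'a form" "'a form"
  | Imp "'a form" "'a form"
  | Box "'a form"
  | Dia "'a form"

text \<open>Labels are natural numbers.  A sequent  R, Gamma => x:A  consists of a set of relational
atoms (pairs (u,v) standing for uRv), a multiset of labelled formulas and one labelled formula.\<close>

datatype 'a seq = Seq "(nat \<times> nat) set" "(nat \<times> 'a form) multiset" nat "'a form"

fun rels :: "'a seq \<Rightarrow> (nat \<times> nat) set" where
  "rels (Seq R G x A) = R"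

definition VarR :: "(nat \<times> nat) set \<Rightarrow> nat set" where
  "VarR R = fst ` R \<union> snd ` R"

definition VarG :: "(nat \<times> 'a form) multiset \<Rightarrow> nat set" where
  "VarG G = fst ` set_mset G"

fun Var :: "'a seq \<Rightarrow> nat set" where
  "Var (Seq R G x A) = VarR R \<union> VarG G \<union> {x}"

definition is_chain :: "(nat \<times> nat) set \<Rightarrow> nat \<Rightarrow> nat \<Rightarrow> nat list \<Rightarrow> bool" where
  "is_chain R u v xs \<longleftrightarrow> xs \<noteq> [] \<and> hd xs = u \<and> last xs = v \<and>
     (\<forall>i. Suc i < length xs \<longrightarrow> (xs ! i, xs ! Suc i) \<in> R)"

definition is_tree :: "(nat \<times> nat) set \<Rightarrow> bool" where
  "is_tree R0 \<longleftrightarrow> (\<exists>x0 \<in> VarR R0. \<forall>y \<in> VarR R0. y \<noteq> x0 \<longrightarrow> (\<exists>!xs. is_chain R0 x0 y xs))"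

definition quasi_tree :: "(nat \<times> nat) set \<Rightarrow> bool" where
  "quasi_tree R \<longleftrightarrow> (\<exists>R0. is_tree R0 \<and> R0 \<subseteq> R \<and> R \<subseteq> R0\<^sup>+)"

fun quasi_tree_like :: "'a seq \<Rightarrow> bool" where
  "quasi_tree_like (Seq R G x A) \<longleftrightarrow>
     (R = {} \<and> VarG G \<subseteq> {x}) \<or> (quasi_tree R \<and> VarG G \<union> {x} \<subseteq> VarR R)"

text \<open>Right weakening and right contraction have no instances in which all
sequents have exactly one formula on the right, so they do not appear.\<close>

inductive ik4_rule :: "'a seq list \<Rightarrow> 'a seq \<Rightarrow> bool" where
  idr: "ik4_rule [] (Seq R {#(x, Atom p)#} x (Atom p))"
| botL: "ik4_rule [] (Seq R (add_mset (x, Bot) G) y B)"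
| cut: "ik4_rule [Seq R G x A, Seq R (add_mset (x, A) G') y B] (Seq R (G + G') y B)"
| weakL: "ik4_rule [Seq R G y B] (Seq R (add_mset (x, A) G) y B)"
| contrL: "ik4_rule [Seq R (add_mset (x, A) (add_mset (x, A) G)) y B] (Seq R (add_mset (x, A) G) y B)"
| impL: "ik4_rule [Seq R G x A, Seq R (add_mset (x, B) G') y C]
           (Seq R (add_mset (x, Imp A B) (G + G')) y C)"
| impR: "ik4_rule [Seq R (add_mset (x, A) G) x B] (Seq R G x (Imp A B))"
| andL1: "ik4_rule [Seq R (add_mset (x, A) G) y C] (Seq R (add_mset (x, And A B) G) y C)"
| andL2: "ik4_rule [Seq R (add_mset (x, B) G) y C] (Seq R (add_mset (x, And A B) G) y C)"
| andR: "ik4_rule [Seq R G x A, Seq R G x B] (Seq R G x (And A B))"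
| orL: "ik4_rule [Seq R (add_mset (x, A) G) y C, Seq R (add_mset (x, B) G) y C]
          (Seq R (add_mset (x, Or A B) G) y C)"
| orR1: "ik4_rule [Seq R G x A] (Seq R G x (Or A B))"
| orR2: "ik4_rule [Seq R G x B] (Seq R G x (Or A B))"
| diaL: "y \<notin> Var (Seq R (add_mset (x, Dia A) G) z C) \<Longrightarrow>
         ik4_rule [Seq (insert (x, y) R) (add_mset (y, A) G) z C] (Seq R (add_mset (x, Dia A) G) z C)"
| diaR: "(x, y) \<in> R \<Longrightarrow> ik4_rule [Seq R G y A] (Seq R G x (Dia A))"
| boxR: "y \<notin> Var (Seq R G x (Box A)) \<Longrightarrow>
         ik4_rule [Seq (insert (x, y) R) G y A] (Seq R G x (Box A))"
| boxL: "(x, y) \<in> R \<Longrightarrow> ik4_rule [Seq R (add_mset (y, A) G) z C] (Seq R (add_mset (x, Box A) G) z C)"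
| tr: "(x, y) \<in> R \<Longrightarrow> (y, z) \<in> R \<Longrightarrow> ik4_rule [Seq (insert (x, z) R) G w C] (Seq R G w C)"

record ('w, 'a) bmodel =
  worlds :: "'w set"
  leq :: "'w \<Rightarrow> 'w \<Rightarrow> bool"
  acc :: "'w \<Rightarrow> 'w \<Rightarrow> bool"
  val :: "'w \<Rightarrow> 'a \<Rightarrow> bool"

definition birel_model :: "('w, 'a) bmodel \<Rightarrow> bool" where
  "birel_model B \<longleftrightarrow>
     (\<forall>w\<in>worlds B. leq B w w) \<and>
     (\<forall>u\<in>worlds B. \<forall>v\<in>worlds B. \<forall>w\<in>worlds B. leq B u v \<longrightarrow> leq B v w \<longrightarrow> leq B u w) \<and>
     (\<forall>u v. acc B u v \<longrightarrow> u \<in> worlds B \<and> v \<in> worlds B) \<and>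
     (\<forall>u v. leq B u v \<longrightarrow> u \<in> worlds B \<and> v \<in> worlds B) \<and>
     (\<forall>w w' v. leq B w w' \<longrightarrow> acc B w v \<longrightarrow> (\<exists>v'. leq B v v' \<and> acc B w' v')) \<and>
     (\<forall>w v v'. acc B w v \<longrightarrow> leq B v v' \<longrightarrow> (\<exists>w'. leq B w w' \<and> acc B w' v')) \<and>
     (\<forall>w w' p. leq B w w' \<longrightarrow> val B w p \<longrightarrow> val B w' p)"

definition BIGL :: "('w, 'a) bmodel \<Rightarrow> bool" where
  "BIGL B \<longleftrightarrow> birel_model B \<and>
     (\<forall>u v w. acc B u v \<longrightarrow> acc B v w \<longrightarrow> acc B u w) \<and>
     \<not> (\<exists>xs ys :: nat \<Rightarrow> 'w. \<forall>i. leq B (xs i) (ys i) \<and> acc B (ys i) (xs (Suc i)))"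

fun forces :: "('w, 'a) bmodel \<Rightarrow> 'w \<Rightarrow> 'a form \<Rightarrow> bool" where
  "forces B w (Atom p) = val B w p"
| "forces B w Bot = False"
| "forces B w (And A1 A2) = (forces B w A1 \<and> forces B w A2)"
| "forces B w (Or A1 A2) = (forces B w A1 \<or> forces B w A2)"
| "forces B w (Imp A1 A2) = (\<forall>w'. leq B w w' \<longrightarrow> forces B w' A1 \<longrightarrow> forces B w' A2)"
| "forces B w (Box A1) = (\<forall>w' v. leq B w w' \<longrightarrow> acc B w' v \<longrightarrow> forces B v A1)"
| "forces B w (Dia A1) = (\<exists>v. acc B w v \<and> forces B v A1)"

definition interp :: "('w, 'a) bmodel \<Rightarrow> (nat \<Rightarrow> 'w) \<Rightarrow> 'a seq \<Rightarrow> bool" where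
  "interp B I S \<longleftrightarrow> (\<forall>u\<in>Var S. I u \<in> worlds B) \<and> (\<forall>(u, v)\<in>rels S. acc B (I u) (I v))"

fun sat_seq :: "('w, 'a) bmodel \<Rightarrow> (nat \<Rightarrow> 'w) \<Rightarrow> 'a seq \<Rightarrow> bool" where
  "sat_seq B I (Seq R G x A) \<longleftrightarrow> ((\<forall>(y, C)\<in>set_mset G. forces B (I y) C) \<longrightarrow> forces B (I x) A)"

end

theory Submission
  imports Defs
begin

text \<open>For most rules the given interpretation already refutes some premiss; the fresh label of
  \<open>\<diamond>L\<close> or \<open>\<box>R\<close> is sent to a witnessing successor. For \<open>\<rightarrow>R\<close> and \<open>\<box>R\<close> the principal label
  has to move up along \<open>\<le>\<close> to the world refuting the formula. The antecedent stays true by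
  monotonicity, and the relational atoms can be kept because the quasi-tree can be reinterpreted
  around the moved label: along a tree edge, (F2) moves the parent up and (F1) the child. In a
  BIGL model \<open>R\<close> is transitive, which takes care of the non-tree atoms, and irreflexive, which
  makes the tree acyclic.\<close>

definition acc_hom :: "('w, 'a) bmodel \<Rightarrow> (nat \<Rightarrow> 'w) \<Rightarrow> (nat \<times> nat) set \<Rightarrow> bool" where
  "acc_hom B I R \<longleftrightarrow> (\<forall>(u, v)\<in>R. acc B (I u) (I v))"

lemma interp_iff_acc_hom: "interp B I S \<longleftrightarrow> (\<forall>u\<in>Var S. I u \<in> worlds B) \<and> acc_hom B I (rels S)"
  unfolding interp_def acc_hom_def ..

lemma VarR_I: "(u, v) \<in> R \<Longrightarrow> u \<in> VarR R \<and> v \<in> VarR R"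
  unfolding VarR_def by force

lemma VarR_insert [simp]: "VarR (insert (u, v) R) = insert u (insert v (VarR R))"
  unfolding VarR_def by auto

lemma VarR_mono_trancl: "R \<subseteq> R0\<^sup>+ \<Longrightarrow> VarR R \<subseteq> VarR R0"
  unfolding VarR_def using trancl_domain trancl_range
  by (metis Domain_fst Domain_mono Range_mono Range_snd Un_mono)

lemma VarG_add_mset [simp]: "VarG (add_mset (x, A) G) = insert x (VarG G)"
  unfolding VarG_def by simp

lemma VarG_union [simp]: "VarG (G + G') = VarG G \<union> VarG G'"
  unfolding VarG_def by auto

lemma VarG_I: "(u, C) \<in># G \<Longrightarrow> u \<in> VarG G"
  unfolding VarG_def by force

lemma interp_mono: "interp B I S \<Longrightarrow> Var S' \<subseteq> Var S \<Longrightarrow> rels S' \<subseteq> rels S \<Longrightarrow> interp B I S'"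
  unfolding interp_def by blast

lemma sat_seq_cong: "\<forall>z\<in>Var S. I z = J z \<Longrightarrow> sat_seq B I S \<longleftrightarrow> sat_seq B J S"
  by (cases S) (auto 0 3 dest: VarG_I)

lemma interp_cong: "\<forall>z\<in>Var S. I z = J z \<Longrightarrow> interp B I S \<longleftrightarrow> interp B J S"
  by (cases S) (simp add: interp_def, use VarR_I in fastforce)

lemma interp_add_var:
  "interp B I S \<Longrightarrow> I x \<in> worlds B \<Longrightarrow> Var S' \<subseteq> insert x (Var S) \<Longrightarrow> rels S' \<subseteq> rels S \<Longrightarrow>
   interp B I S'"
  unfolding interp_def by blast

lemma interp_add_edge:
  "interp B I S \<Longrightarrow> acc B (I x) (I y) \<Longrightarrow> Var S' \<subseteq> Var S \<Longrightarrow> rels S' \<subseteq> insert (x, y) (rels S) \<Longrightarrow>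
   interp B I S'"
  unfolding interp_def by blast

definition premiss_refuted_above ::
    "('w, 'a) bmodel \<Rightarrow> (nat \<Rightarrow> 'w) \<Rightarrow> 'a seq \<Rightarrow> 'a seq list \<Rightarrow> bool" where
  "premiss_refuted_above B I S Ps \<longleftrightarrow>
     (\<exists>S'\<in>set Ps. \<exists>J. interp B J S' \<and> \<not> sat_seq B J S' \<and> (\<forall>z\<in>Var S. leq B (I z) (J z)))"

lemma premiss_refuted_aboveI:
  "interp B J S' \<Longrightarrow> \<not> sat_seq B J S' \<Longrightarrow> \<forall>z\<in>Var S. leq B (I z) (J z) \<Longrightarrow> S' \<in> set Ps \<Longrightarrow>
   premiss_refuted_above B I S Ps"
  unfolding premiss_refuted_above_def by blast

lemma is_chain_rtrancl:
  assumes "is_chain R u v xs" shows "(u, v) \<in> R\<^sup>*"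
proof -
  have ne: "xs \<noteq> []" and steps: "\<And>i. Suc i < length xs \<Longrightarrow> (xs ! i, xs ! Suc i) \<in> R"
    using assms unfolding is_chain_def by auto
  have "i < length xs \<Longrightarrow> (hd xs, xs ! i) \<in> R\<^sup>*" for i
  proof (induction i)
    case 0
    then show ?case using ne by (simp add: hd_conv_nth)
  next
    case (Suc i)
    then show ?case using steps[of i] by (meson Suc_lessD rtrancl.rtrancl_into_rtrancl)
  qed
  from this[of "length xs - 1"] ne assms show ?thesis
    by (simp add: is_chain_def last_conv_nth)
qed

lemma is_chain_snoc: "is_chain R u v xs \<Longrightarrow> (v, w) \<in> R \<Longrightarrow> is_chain R u w (xs @ [w])"
  unfolding is_chain_def
  by (auto simp: nth_append) (metis Suc_lessI diff_Suc_1 last_conv_nth)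

lemma is_tree_single_valued_converse:
  assumes tree: "is_tree R" and "acyclic R"
  shows "single_valued (R\<inverse>)"
proof (rule single_valuedI)
  fix y p q assume "(y, p) \<in> R\<inverse>" "(y, q) \<in> R\<inverse>"
  then have py: "(p, y) \<in> R" and qy: "(q, y) \<in> R" by auto
  from tree obtain x0 where "x0 \<in> VarR R"
    and unique: "\<And>y. y \<in> VarR R \<Longrightarrow> y \<noteq> x0 \<Longrightarrow> \<exists>!xs. is_chain R x0 y xs"
    unfolding is_tree_def by blast
  have chain: "\<exists>xs. is_chain R x0 z xs" if "z \<in> VarR R" for z
    using unique[OF that] by (cases "z = x0") (auto simp: is_chain_def)
  obtain cp cq where cp: "is_chain R x0 p cp" and cq: "is_chain R x0 q cq"
    using chain VarR_I py qy by meson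
  have "y \<noteq> x0"
    using is_chain_rtrancl[OF cp] py \<open>acyclic R\<close> unfolding acyclic_def
    by (metis rtrancl_into_trancl1)
  then have "cp @ [y] = cq @ [y]"
    using unique[of y] is_chain_snoc[OF cp py] is_chain_snoc[OF cq qy] VarR_I[OF py] by blast
  with cp cq show "p = q" unfolding is_chain_def by auto
qed

lemma finite_acyclic_leaf_edge:
  assumes "finite R" "acyclic R" "R \<noteq> {}"
  obtains p l where "(p, l) \<in> R" "l \<notin> Domain R"
proof -
  have "wf (R\<inverse>)" using finite_acyclic_wf_converse assms by blast
  moreover obtain l where "l \<in> Range R" using assms(3) by auto
  ultimately obtain l where "l \<in> Range R" "\<forall>y. (y, l) \<in> R\<inverse> \<longrightarrow> y \<notin> Range R"
    unfolding wf_eq_minimal by metis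
  then show thesis using that by blast
qed

locale birelational =
  fixes B :: "('w, 'a) bmodel"
  assumes birel: "birel_model B"
begin

lemma leq_refl: "w \<in> worlds B \<Longrightarrow> leq B w w"
  using birel unfolding birel_model_def by blast

lemma leq_worlds: "leq B u v \<Longrightarrow> u \<in> worlds B \<and> v \<in> worlds B"
  using birel unfolding birel_model_def by blast

lemma leq_trans: "leq B u v \<Longrightarrow> leq B v w \<Longrightarrow> leq B u w"
  using birel leq_worlds unfolding birel_model_def by meson

lemma acc_worlds: "acc B u v \<Longrightarrow> u \<in> worlds B \<and> v \<in> worlds B"
  using birel unfolding birel_model_def by blast

lemma F1: "leq B w w' \<Longrightarrow> acc B w v \<Longrightarrow> \<exists>v'. leq B v v' \<and> acc B w' v'"
  using birel unfolding birel_model_def by blast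

lemma F2: "acc B w v \<Longrightarrow> leq B v v' \<Longrightarrow> \<exists>w'. leq B w w' \<and> acc B w' v'"
  using birel unfolding birel_model_def by blast

lemma val_mono: "leq B w w' \<Longrightarrow> val B w p \<Longrightarrow> val B w' p"
  using birel unfolding birel_model_def by blast

lemma forces_mono: "forces B w A \<Longrightarrow> leq B w w' \<Longrightarrow> forces B w' A"
proof (induction A arbitrary: w w')
  case (Dia A)
  then obtain v where "acc B w v" "forces B v A" by auto
  with Dia F1 show ?case by fastforce
qed (auto intro: val_mono leq_trans)

lemma interp_refl: "interp B I S \<Longrightarrow> \<forall>z\<in>Var S. leq B (I z) (I z)"
  unfolding interp_def using leq_refl by blast

lemma acc_hom_add_leaf:
  assumes "acc_hom B J R" "l \<notin> VarR R" "p \<noteq> l" "acc B (J p) v"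
  shows "acc_hom B (J(l := v)) (insert (p, l) R)"
  using assms VarR_I unfolding acc_hom_def by fastforce

lemma lift_forest:
  assumes "finite R" "acyclic R" "single_valued (R\<inverse>)" "acc_hom B I R" "leq B (I x) w"
  shows "\<exists>J. (\<forall>z\<in>insert x (VarR R). leq B (I z) (J z)) \<and>
             (\<forall>z. z \<notin> insert x (VarR R) \<longrightarrow> J z = I z) \<and> J x = w \<and> acc_hom B J R"
  using assms
proof (induction R arbitrary: x w rule: finite_psubset_induct)
  case (psubset R)
  show ?case
  proof (cases "R = {}")
    case True
    with psubset.prems show ?thesis
      by (intro exI[of _ "I(x := w)"]) (auto simp: VarR_def acc_hom_def)
  next
    case False
    then obtain p l where pl: "(p, l) \<in> R" and leaf: "l \<notin> Domain R"
      using finite_acyclic_leaf_edge psubset.hyps psubset.prems(1) by blast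
    define R' where "R' = R - {(p, l)}"
    have R'_sub: "R' \<subset> R" using pl R'_def by auto
    have "p \<noteq> l" using pl leaf by blast
    have l_new: "l \<notin> VarR R'"
      using leaf pl psubset.prems(2) unfolding R'_def VarR_def single_valued_def by force
    have VarR_R: "VarR R = insert p (insert l (VarR R'))"
      using pl unfolding R'_def VarR_def by force
    have "R' \<subseteq> R" using R'_sub by blast
    then have "acyclic R'" "single_valued (R'\<inverse>)" "acc_hom B I R'"
      using psubset.prems(1-3) acyclic_subset single_valued_subset[OF converse_mono[THEN iffD2]]
      unfolding acc_hom_def by auto
    note IH = psubset.IH[OF R'_sub this]
    have acc_pl: "acc B (I p) (I l)" using psubset.prems(3) pl unfolding acc_hom_def by blast
    show ?thesis
    proof (cases "l = x")
      case True
      obtain p' where p': "leq B (I p) p'" "acc B p' w"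
        using F2[OF acc_pl] psubset.prems(4) True by blast
      obtain J where J: "\<forall>z\<in>insert p (VarR R'). leq B (I z) (J z)"
        "\<forall>z. z \<notin> insert p (VarR R') \<longrightarrow> J z = I z" "J p = p'" "acc_hom B J R'"
        using IH[OF p'(1)] by blast
      have R: "R = insert (p, l) R'" using pl R'_def by blast
      show ?thesis
      proof (intro exI[of _ "J(x := w)"] conjI)
        show "acc_hom B (J(x := w)) R"
          using R True acc_hom_add_leaf[OF J(4) l_new \<open>p \<noteq> l\<close>] J(3) p'(2) by simp
      qed (use J True VarR_R psubset.prems(4) in auto)
    next
      case False
      obtain J where J: "\<forall>z\<in>insert x (VarR R'). leq B (I z) (J z)"
        "\<forall>z. z \<notin> insert x (VarR R') \<longrightarrow> J z = I z" "J x = w" "acc_hom B J R'"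
        using IH[OF psubset.prems(4)] by blast
      have leq_p: "leq B (I p) (J p)"
        using J(1,2) leq_refl acc_worlds[OF acc_pl] by metis
      then obtain v where v: "leq B (I l) v" "acc B (J p) v" using F1[OF _ acc_pl] by blast
      have R: "R = insert (p, l) R'" using pl R'_def by blast
      show ?thesis
      proof (intro exI[of _ "J(l := v)"] conjI)
        show "acc_hom B (J(l := v)) R"
          using R acc_hom_add_leaf[OF J(4) l_new \<open>p \<noteq> l\<close> v(2)] by simp
      qed (use J False VarR_R v leq_p in auto)
    qed
  qed
qed

lemma forces_antecedent_mono:
  "\<forall>(u, D)\<in>#G. forces B (I u) D \<Longrightarrow> \<forall>u\<in>VarG G. leq B (I u) (J u) \<Longrightarrow>
   \<forall>(u, D)\<in>#G. forces B (J u) D"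
  using forces_mono VarG_I by fast

lemma interp_fun_upd_fresh:
  assumes "interp B I S" "y \<notin> Var S" "x \<in> Var S" "acc B (I x) v"
    and "Var S' \<subseteq> insert y (Var S)" "rels S' \<subseteq> insert (x, y) (rels S)"
  shows "interp B (I(y := v)) S'"
proof -
  have "interp B (I(y := v)) S" using assms(1,2) interp_cong[of S "I(y := v)" I] by auto
  moreover have "acc B ((I(y := v)) x) ((I(y := v)) y)" using assms(2-4) by auto
  moreover have "(I(y := v)) y \<in> worlds B" using acc_worlds[OF assms(4)] by simp
  ultimately show ?thesis using assms(5,6) unfolding interp_def by blast
qed

lemma premiss_refuted_same:
  "interp B I S \<Longrightarrow> S' \<in> set Ps \<Longrightarrow> interp B I S' \<Longrightarrow> \<not> sat_seq B I S' \<Longrightarrow>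
   premiss_refuted_above B I S Ps"
  using premiss_refuted_aboveI interp_refl by blast

lemma premiss_refuted_sub:
  "interp B I S \<Longrightarrow> S' \<in> set Ps \<Longrightarrow> Var S' \<subseteq> Var S \<Longrightarrow> rels S' \<subseteq> rels S \<Longrightarrow>
   \<not> sat_seq B I S' \<Longrightarrow> premiss_refuted_above B I S Ps"
  using premiss_refuted_same interp_mono by blast

lemma premiss_refuted_cut:
  assumes "interp B I (Seq R (G + G') y C)" and "\<not> sat_seq B I (Seq R (G + G') y C)"
  shows "premiss_refuted_above B I (Seq R (G + G') y C)
           [Seq R G x A, Seq R (add_mset (x, A) G') y C]"
proof -
  let ?S = "Seq R (G + G') y C"
  define J where "J = (if x \<in> Var ?S then I else I(x := I y))"
  have agree: "\<forall>z\<in>Var ?S. J z = I z" unfolding J_def by auto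
  have "interp B J ?S" using assms(1) interp_cong[OF agree] by blast
  moreover have "J x \<in> worlds B" using assms(1) unfolding J_def interp_def by auto
  ultimately have left: "interp B J (Seq R G x A)"
    and right: "interp B J (Seq R (add_mset (x, A) G') y C)"
    by (auto elim!: interp_add_var)
  have not_sat: "\<not> sat_seq B J ?S" using assms(2) sat_seq_cong[OF agree] by blast
  have above: "\<forall>z\<in>Var ?S. leq B (I z) (J z)" using interp_refl[OF assms(1)] agree by simp
  show ?thesis
  proof (cases "forces B (J x) A")
    case True
    with not_sat have "\<not> sat_seq B J (Seq R (add_mset (x, A) G') y C)" by auto
    from premiss_refuted_aboveI[OF right this above] show ?thesis by simp
  next
    case False
    with not_sat have "\<not> sat_seq B J (Seq R G x A)" by auto
    from premiss_refuted_aboveI[OF left this above] show ?thesis by simp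
  qed
qed

lemma premiss_refuted_diaL:
  assumes "interp B I (Seq R (add_mset (x, Dia A) G) z C)"
    and "\<not> sat_seq B I (Seq R (add_mset (x, Dia A) G) z C)"
    and fresh: "y \<notin> Var (Seq R (add_mset (x, Dia A) G) z C)"
  shows "premiss_refuted_above B I (Seq R (add_mset (x, Dia A) G) z C)
           [Seq (insert (x, y) R) (add_mset (y, A) G) z C]"
proof -
  let ?S = "Seq R (add_mset (x, Dia A) G) z C"
  obtain v where v: "acc B (I x) v" "forces B v A" using assms(2) by auto
  let ?P = "Seq (insert (x, y) R) (add_mset (y, A) G) z C"
  have "interp B (I(y := v)) ?P"
    by (rule interp_fun_upd_fresh[OF assms(1) fresh _ v(1)]) auto
  moreover have "\<not> sat_seq B (I(y := v)) ?P"
    using assms(2) v(2) fresh by (auto dest: VarG_I)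
  moreover have "\<forall>u\<in>Var ?S. leq B (I u) ((I(y := v)) u)"
    using interp_refl[OF assms(1)] fresh by auto
  ultimately show ?thesis by (rule premiss_refuted_aboveI) simp
qed

end

locale bigl_model = birelational +
  assumes bigl: "BIGL B"
begin

lemma acc_trans: "acc B u v \<Longrightarrow> acc B v w \<Longrightarrow> acc B u w"
  using bigl unfolding BIGL_def by blast

lemma acc_irrefl: "\<not> acc B w w"
proof
  assume w: "acc B w w"
  moreover have "leq B w w" using leq_refl acc_worlds[OF w] by blast
  ultimately have "\<exists>xs ys. \<forall>i. leq B (xs i) (ys i) \<and> acc B (ys i) (xs (Suc i))"
    by (intro exI[of _ "\<lambda>_. w"]) simp
  with bigl show False unfolding BIGL_def by simp
qed

lemma acc_hom_trancl: "acc_hom B I R \<Longrightarrow> acc_hom B I (R\<^sup>+)"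
  unfolding acc_hom_def
proof clarify
  fix a b assume hom: "\<forall>(u, v)\<in>R. acc B (I u) (I v)" and "(a, b) \<in> R\<^sup>+"
  from \<open>(a, b) \<in> R\<^sup>+\<close> show "acc B (I a) (I b)"
    by (induction rule: trancl_induct) (use hom acc_trans in blast)+
qed

lemma acyclic_if_acc_hom: "acc_hom B I R \<Longrightarrow> acyclic R"
  using acc_hom_trancl acc_irrefl unfolding acyclic_def acc_hom_def by blast

lemma lift_quasi_tree_like:
  assumes "finite R" "quasi_tree_like (Seq R G x A)" "interp B I (Seq R G x A)" "leq B (I x) w"
  shows "\<exists>J. interp B J (Seq R G x A) \<and> (\<forall>z\<in>Var (Seq R G x A). leq B (I z) (J z)) \<and> J x = w"
proof (cases "R = {} \<and> VarG G \<subseteq> {x}")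
  case True
  with assms(4) leq_worlds show ?thesis
    by (intro exI[of _ "I(x := w)"]) (auto simp: interp_def VarR_def)
next
  case False
  with assms(2) have "quasi_tree R" and labels: "VarG G \<union> {x} \<subseteq> VarR R" by auto
  then obtain R0 where "is_tree R0" "R0 \<subseteq> R" "R \<subseteq> R0\<^sup>+"
    unfolding quasi_tree_def by blast
  have hom: "acc_hom B I R0"
    using assms(3) \<open>R0 \<subseteq> R\<close> unfolding interp_iff_acc_hom acc_hom_def by auto
  have "acyclic R0" using hom by (rule acyclic_if_acc_hom)
  moreover have "finite R0" using assms(1) \<open>R0 \<subseteq> R\<close> by (rule finite_subset[rotated])
  ultimately obtain J where J: "\<forall>z\<in>insert x (VarR R0). leq B (I z) (J z)" "J x = w"
    "acc_hom B J R0"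
    using lift_forest is_tree_single_valued_converse[OF \<open>is_tree R0\<close>] hom assms(4) by blast
  have "Var (Seq R G x A) \<subseteq> VarR R0" using labels VarR_mono_trancl[OF \<open>R \<subseteq> R0\<^sup>+\<close>] by auto
  then have lifted: "\<forall>z\<in>Var (Seq R G x A). leq B (I z) (J z)" using J(1) by blast
  have "acc_hom B J R"
    using acc_hom_trancl[OF J(3)] \<open>R \<subseteq> R0\<^sup>+\<close> unfolding acc_hom_def by blast
  moreover have "\<forall>z\<in>Var (Seq R G x A). J z \<in> worlds B" using lifted leq_worlds by blast
  ultimately have "interp B J (Seq R G x A)" unfolding interp_iff_acc_hom by simp
  with lifted J(2) show ?thesis by blast
qed

lemma premiss_refuted_impR:
  assumes "finite R" "quasi_tree_like (Seq R G x (Imp A A'))"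
    and "interp B I (Seq R G x (Imp A A'))" "\<not> sat_seq B I (Seq R G x (Imp A A'))"
  shows "premiss_refuted_above B I (Seq R G x (Imp A A')) [Seq R (add_mset (x, A) G) x A']"
proof -
  obtain w where w: "leq B (I x) w" "forces B w A" "\<not> forces B w A'" using assms(4) by auto
  then obtain J where J: "interp B J (Seq R G x (Imp A A'))"
    "\<forall>z\<in>Var (Seq R G x (Imp A A')). leq B (I z) (J z)" "J x = w"
    using lift_quasi_tree_like[OF assms(1-3)] by blast
  let ?P = "Seq R (add_mset (x, A) G) x A'"
  have "interp B J ?P" using J(1) by (rule interp_mono) auto
  moreover have "\<forall>(u, D)\<in>#G. forces B (J u) D"
    using forces_antecedent_mono[of G I J] assms(4) J(2) by simp
  then have "\<not> sat_seq B J ?P" using J(3) w(2,3) by auto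
  ultimately show ?thesis using J(2) by (rule premiss_refuted_aboveI) simp
qed

lemma premiss_refuted_boxR:
  assumes "finite R" "quasi_tree_like (Seq R G x (Box A))"
    and "interp B I (Seq R G x (Box A))" "\<not> sat_seq B I (Seq R G x (Box A))"
    and fresh: "y \<notin> Var (Seq R G x (Box A))"
  shows "premiss_refuted_above B I (Seq R G x (Box A)) [Seq (insert (x, y) R) G y A]"
proof -
  let ?S = "Seq R G x (Box A)"
  obtain w v where w: "leq B (I x) w" "acc B w v" "\<not> forces B v A" using assms(4) by auto
  then obtain J where J: "interp B J ?S" "\<forall>z\<in>Var ?S. leq B (I z) (J z)" "J x = w"
    using lift_quasi_tree_like[OF assms(1-3)] by blast
  let ?P = "Seq (insert (x, y) R) G y A"
  have "interp B (J(y := v)) ?P"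
    by (rule interp_fun_upd_fresh[OF J(1) fresh]) (use w(2) J(3) in auto)
  moreover have "\<forall>(u, D)\<in>#G. forces B (J u) D"
    using forces_antecedent_mono[of G I J] assms(4) J(2) by simp
  then have "\<not> sat_seq B (J(y := v)) ?P" using w(3) fresh by (auto dest: VarG_I)
  moreover have "\<forall>z\<in>Var ?S. leq B (I z) ((J(y := v)) z)" using J(2) fresh by auto
  ultimately show ?thesis by (rule premiss_refuted_aboveI) simp
qed

lemma premiss_refuted:
  assumes "ik4_rule Ps S" "finite (rels S)" "quasi_tree_like S" "interp B I S" "\<not> sat_seq B I S"
  shows "premiss_refuted_above B I S Ps"
  using assms(1)
proof cases
  case (cut R G x A G' y C)
  then show ?thesis using premiss_refuted_cut assms(4,5) by blast
next
  case (weakL R G y C x A)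
  then show ?thesis using assms(4,5) by (intro premiss_refuted_sub[of I S "Seq R G y C"]) auto
next
  case (contrL R x A G y C)
  then show ?thesis using assms(4,5)
    by (intro premiss_refuted_sub[of I S "Seq R (add_mset (x, A) (add_mset (x, A) G)) y C"]) auto
next
  case (impL R G x A A' G' y C)
  show ?thesis
  proof (cases "forces B (I x) A")
    case True
    then have "forces B (I x) A'" using assms(4,5) leq_refl unfolding impL interp_def by auto
    then show ?thesis using impL assms(4,5)
      by (intro premiss_refuted_sub[of I S "Seq R (add_mset (x, A') G') y C"]) auto
  next
    case False
    then show ?thesis using impL assms(4,5)
      by (intro premiss_refuted_sub[of I S "Seq R G x A"]) auto
  qed
next
  case (impR R x A G A')
  then show ?thesis using premiss_refuted_impR assms(2-5) by simp
next
  case (andL1 R x A G y C A')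
  then show ?thesis using assms(4,5)
    by (intro premiss_refuted_sub[of I S "Seq R (add_mset (x, A) G) y C"]) auto
next
  case (andL2 R x A' G y C A)
  then show ?thesis using assms(4,5)
    by (intro premiss_refuted_sub[of I S "Seq R (add_mset (x, A') G) y C"]) auto
next
  case (andR R G x A A')
  show ?thesis
  proof (cases "forces B (I x) A")
    case True
    then show ?thesis using andR assms(4,5)
      by (intro premiss_refuted_sub[of I S "Seq R G x A'"]) auto
  next
    case False
    then show ?thesis using andR assms(4,5)
      by (intro premiss_refuted_sub[of I S "Seq R G x A"]) auto
  qed
next
  case (orL R x A G y C A')
  show ?thesis
  proof (cases "forces B (I x) A")
    case True
    then show ?thesis using orL assms(4,5)
      by (intro premiss_refuted_sub[of I S "Seq R (add_mset (x, A) G) y C"]) auto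
  next
    case False
    then show ?thesis using orL assms(4,5)
      by (intro premiss_refuted_sub[of I S "Seq R (add_mset (x, A') G) y C"]) auto
  qed
next
  case (orR1 R G x A A')
  then show ?thesis using assms(4,5) by (intro premiss_refuted_sub[of I S "Seq R G x A"]) auto
next
  case (orR2 R G x A' A)
  then show ?thesis using assms(4,5) by (intro premiss_refuted_sub[of I S "Seq R G x A'"]) auto
next
  case (diaL y R x A G z C)
  then show ?thesis using premiss_refuted_diaL assms(4,5) by blast
next
  case (diaR x y R G A)
  then have "acc B (I x) (I y)" "y \<in> VarR R" using assms(4) VarR_I unfolding interp_def by auto
  with diaR show ?thesis using assms(4,5)
    by (intro premiss_refuted_sub[of I S "Seq R G y A"]) auto
next
  case (boxR y R G x A)
  then show ?thesis using premiss_refuted_boxR assms(2-5) by simp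
next
  case (boxL x y R A G z C)
  then have "acc B (I x) (I y)" "y \<in> VarR R" using assms(4) VarR_I unfolding interp_def by auto
  moreover have "leq B (I x) (I x)" using leq_refl acc_worlds calculation(1) by blast
  ultimately show ?thesis using boxL assms(4,5)
    by (intro premiss_refuted_sub[of I S "Seq R (add_mset (y, A) G) z C"]) auto
next
  case (tr x y R z G w C)
  let ?P = "Seq (insert (x, z) R) G w C"
  have "acc B (I x) (I y)" "acc B (I y) (I z)" using assms(4) tr unfolding interp_def by auto
  then have "acc B (I x) (I z)" by (rule acc_trans)
  from interp_add_edge[OF assms(4) this, of ?P] have "interp B I ?P"
    using tr VarR_I[OF tr(3)] VarR_I[OF tr(4)] by auto
  moreover have "\<not> sat_seq B I ?P" using assms(5) tr by simp
  ultimately show ?thesis using premiss_refuted_same[OF assms(4)] tr by simp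
qed (use assms(5) in auto)

end

theorem mainTheorem5:
  fixes B :: "('w, 'a) bmodel" and I :: "nat \<Rightarrow> 'w" and S :: "'a seq"
    and Ps :: "'a seq list"
  assumes "finite (rels S)"
    and "quasi_tree_like S"
    and "BIGL B"
    and "interp B I S"
    and "\<not> sat_seq B I S"
    and "ik4_rule Ps S"
  shows "\<exists>S' \<in> set Ps. \<exists>I'. interp B I' S' \<and> \<not> sat_seq B I' S' \<and>
           (\<forall>z \<in> Var S. leq B (I z) (I' z))"
proof -
  interpret bigl_model B
    using assms(3) by unfold_locales (simp_all add: BIGL_def)
  show ?thesis
    using premiss_refuted[OF assms(6,1,2,4,5)] unfolding premiss_refuted_above_def .
qed

end
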